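(* (i) Let $G=(V,E,w)$ be a weighted graph with $n=|V|\ge 3$ vertices and symmetric nonnegative weights. Then $\rho^*_G\in[1,n-2]$. (ii) Let $G=(V,E)$ be a connected unweighted graph with $n=|V|$ and $m=|E|$. Then $\rho^*_G\in\left[1,\frac{n^2-2n}{2m-n}\right]$.
   Context: Let $V=\{v_1,\dots,v_n\}$; weights are given by a symmetric nonnegative matrix with $w_{ij}=0$ when $(v_i,v_j)\notin E$. An unweighted graph has all edge weights equal to $1$. An HC-tree for $V$ is a rooted tree with leaf set $V$; LCA denotes lowest common ancestor. For distinct $i,j,k$: relation $\{i,j|k\}$ holds in $T$ if $\mathrm{LCA}(v_i,v_j)$ is a proper descendant of $\mathrm{LCA}(v_i,v_j,v_k)$; $\{i|j|k\}$ holds if $\mathrm{LCA}(v_i,v_j)=\mathrm{LCA}(v_j,v_k)=\mathrm{LCA}(v_i,v_j,v_k)$. The triplet cost $c_T(i,j,k)$ is $w_{ik}+w_{jk}$ if $\{i,j|k\}$ holds, $w_{ij}+w_{jk}$ if $\{i,k|j\}$, $w_{ij}+w_{ik}$ if $\{j,k|i\}$, and $w_{ij}+w_{jk}+w_{ik}$ if $\{i|j|k\}$. $\mathrm{TC}_G(T)=\sum c_T(i,j,k)$ over unordered triples of distinct indices; base cost $\mathrm{BC}(G)=\sum\min\{w_{ij}+w_{ik},w_{ij}+w_{jk},w_{ik}+w_{jk}\}$ over the same triples. The ratio-cost is $\rho_G(T)=\mathrm{TC}_G(T)/\mathrm{BC}(G)$ with conventions $0/0=1$ and $x/0=+\infty$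 for $x>0$, and $\rho^*_G=\min_T\rho_G(T)$ over all HC-trees $T$ for $V$. *)

theory Defs
  imports Complex_Main "HOL-Library.Sublist" "HOL-Library.Extended_Real"
begin

text \<open>Vertices are v_0,...,v_{n-1}, identified with the naturals below n.
  HC-trees: rooted (ordered) trees; internal nodes have a nonempty list of children,
  leaves carry a vertex label.\<close>

datatype htree = Lf nat | Nd "htree list"

fun lvs :: "htree \<Rightarrow> nat list" where
  "lvs (Lf v) = [v]"
| "lvs (Nd ts) = concat (map lvs ts)"

fun wf_ht :: "htree \<Rightarrow> bool" where
  "wf_ht (Lf v) = True"
| "wf_ht (Nd ts) = (ts \<noteq> [] \<and> (\<forall>t\<in>set ts. wf_ht t))"

definition hc_tree :: "nat \<Rightarrow> htree \<Rightarrow> bool" where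
  "hc_tree n T \<longleftrightarrow> wf_ht T \<and> distinct (lvs T) \<and> set (lvs T) = {..<n}"

text \<open>Nodes are addressed by positions (paths of child indices from the root).\<close>
primrec subtree_at :: "htree \<Rightarrow> nat list \<Rightarrow> htree option" where
  "subtree_at t [] = Some t"
| "subtree_at t (i # p) = (case t of Lf _ \<Rightarrow> None
                   | Nd ts \<Rightarrow> if i < length ts then subtree_at (ts ! i) p else None)"

definition pos :: "htree \<Rightarrow> nat list set" where
  "pos t = {p. subtree_at t p \<noteq> None}"

definition cl :: "htree \<Rightarrow> nat list \<Rightarrow> nat set" where
  "cl t p = set (lvs (the (subtree_at t p)))"

text \<open>Ancestor = prefix of positions. LCA of a set S of leaves: the common ancestor
  that is a descendant of every common ancestor.\<close>
definition lca :: "htree \<Rightarrow> nat set \<Rightarrow> nat list" where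
  "lca t S = (THE p. p \<in> pos t \<and> S \<subseteq> cl t p \<and>
                     (\<forall>q\<in>pos t. S \<subseteq> cl t q \<longrightarrow> prefix q p))"

definition rel2 :: "htree \<Rightarrow> nat \<Rightarrow> nat \<Rightarrow> nat \<Rightarrow> bool" where
  "rel2 t i j k \<longleftrightarrow> strict_prefix (lca t {i,j,k}) (lca t {i,j})"

definition rel3 :: "htree \<Rightarrow> nat \<Rightarrow> nat \<Rightarrow> nat \<Rightarrow> bool" where
  "rel3 t i j k \<longleftrightarrow> lca t {i,j} = lca t {j,k} \<and> lca t {j,k} = lca t {i,j,k}"

definition tcost :: "(nat \<Rightarrow> nat \<Rightarrow> real) \<Rightarrow> htree \<Rightarrow> nat \<Rightarrow> nat \<Rightarrow> nat \<Rightarrow> real" where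
  "tcost w t i j k =
     (if rel2 t i j k then w i k + w j k
      else if rel2 t i k j then w i j + w j k
      else if rel2 t j k i then w i j + w i k
      else if rel3 t i j k then w i j + w j k + w i k
      else 0)"

definition triples :: "nat \<Rightarrow> (nat \<times> nat \<times> nat) set" where
  "triples n = {(i,j,k). i < j \<and> j < k \<and> k < n}"

definition TC :: "nat \<Rightarrow> (nat \<Rightarrow> nat \<Rightarrow> real) \<Rightarrow> htree \<Rightarrow> real" where
  "TC n w t = (\<Sum>(i,j,k)\<in>triples n. tcost w t i j k)"

definition BC :: "nat \<Rightarrow> (nat \<Rightarrow> nat \<Rightarrow> real) \<Rightarrow> real" where
  "BC n w = (\<Sum>(i,j,k)\<in>triples n.
      min (w i j + w i k) (min (w i j + w j k) (w i k + w j k)))"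

text \<open>Ratio cost with 0/0 = 1 and x/0 = +\<infinity> for x > 0.\<close>
definition ratio :: "nat \<Rightarrow> (nat \<Rightarrow> nat \<Rightarrow> real) \<Rightarrow> htree \<Rightarrow> ereal" where
  "ratio n w t = (if BC n w = 0 then (if TC n w t = 0 then 1 else \<infinity>)
                  else ereal (TC n w t / BC n w))"

definition rho_star :: "nat \<Rightarrow> (nat \<Rightarrow> nat \<Rightarrow> real) \<Rightarrow> ereal" where
  "rho_star n w = Inf (ratio n w ` {T. hc_tree n T})"

definition simple_graph :: "nat \<Rightarrow> nat set set \<Rightarrow> bool" where
  "simple_graph n E \<longleftrightarrow> (\<forall>e\<in>E. \<exists>i j. e = {i,j} \<and> i \<noteq> j \<and> i < n \<and> j < n)"

definition connected_graph :: "nat \<Rightarrow> nat set set \<Rightarrow> bool" where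
  "connected_graph n E \<longleftrightarrow>
     (\<forall>i<n. \<forall>j<n. (i, j) \<in> {(a, b). {a, b} \<in> E}\<^sup>*)"

definition unw :: "nat set set \<Rightarrow> nat \<Rightarrow> nat \<Rightarrow> real" where
  "unw E i j = (if {i,j} \<in> E then 1 else 0)"

end

theory Submission
  imports Defs "HOL-Library.Disjoint_Sets" "HOL-Library.Product_Lexorder"
begin

text \<open>
  Every triple pays at least the smallest of its three pair sums, so BC \<le> TC for every tree
  and the ratio-cost is at least 1.

  For the bound n - 2, order the pairs by weight, breaking ties lexicographically, and call a
  pair dominant if it beats every other pair meeting it. The dominant pairs form a matching M.
  In the tree whose root has the pairs of M and the unmatched vertices as children, a triple
  pays at most the weights of its pairs outside M, so TC is at most n - 2 times the total
  weight W of the pairs outside M. A pair e outside M is beaten by a pair meeting it; in the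
  triple spanned by the two, e is not the heaviest pair, so w(e) is part of the base cost of
  that triple. Hence W \<le> BC.

  For a connected graph with m edges, build a caterpillar by splitting off a vertex of minimum
  degree at each level; this gives 3 TC \<le> (n - 2) 2m. A triple containing a path of length
  two has base cost at least 1, and a triangle has base cost 2, so 3 BC is at least the sum
  of d(v) (d(v) - 1) over all vertices, which by Cauchy-Schwarz is at least 4m^2/n - 2m.
  Connectivity and n \<ge> 3 force 2m > n.
\<close>

section \<open>Lowest common ancestors\<close>

lemma distinct_concat_nth_disjoint:
  "distinct (concat xss) \<Longrightarrow> c < length xss \<Longrightarrow> d < length xss \<Longrightarrow> c \<noteq> d
   \<Longrightarrow> set (xss!c) \<inter> set (xss!d) = {}"
proof (induction xss arbitrary: c d)
  case Nil then show ?case by simp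
next
  case (Cons xs xss)
  show ?case
  proof (cases c)
    case 0
    then obtain d' where "d = Suc d'" using Cons by (cases d) auto
    then show ?thesis using Cons 0 nth_mem[of d' xss] by (simp add: disjoint_iff)
  next
    case (Suc c')
    show ?thesis
    proof (cases d)
      case 0 then show ?thesis using Cons Suc by (simp add: disjoint_iff) (metis nth_mem)
    next
      case (Suc d') then show ?thesis using Cons \<open>c = Suc c'\<close> by auto
    qed
  qed
qed

lemma pos_Lf [simp]: "pos (Lf v) = {[]}"
proof -
  have "subtree_at (Lf v) p \<noteq> None \<longleftrightarrow> p = []" for p by (cases p) auto
  then show ?thesis unfolding pos_def by auto
qed

lemma mem_pos_Nd:
  "p \<in> pos (Nd ts) \<longleftrightarrow> p = [] \<or> (\<exists>c q. p = c # q \<and> c < length ts \<and> q \<in> pos (ts!c))"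
  unfolding pos_def by (cases p) auto

lemma Nil_in_pos [simp]: "[] \<in> pos t"
  unfolding pos_def by simp

lemma cl_Nil [simp]: "cl t [] = set (lvs t)"
  unfolding cl_def by simp

lemma cl_Nd_Cons: "c < length ts \<Longrightarrow> cl (Nd ts) (c # q) = cl (ts!c) q"
  unfolding cl_def by simp

lemma cl_subset_lvs: "p \<in> pos t \<Longrightarrow> cl t p \<subseteq> set (lvs t)"
proof (induction t arbitrary: p)
  case (Lf v) then show ?case by simp
next
  case (Nd ts)
  show ?case
  proof (cases p)
    case Nil then show ?thesis by simp
  next
    case (Cons c q)
    then have c: "c < length ts" and q: "q \<in> pos (ts!c)" using Nd.prems mem_pos_Nd by auto
    have "cl (ts!c) q \<subseteq> set (lvs (ts!c))" using Nd.IH[OF nth_mem[OF c] q] .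
    moreover have "set (lvs (ts!c)) \<subseteq> set (lvs (Nd ts))" using c by (auto dest!: nth_mem)
    ultimately show ?thesis using Cons c cl_Nd_Cons by auto
  qed
qed

definition is_lca :: "htree \<Rightarrow> nat set \<Rightarrow> nat list \<Rightarrow> bool" where
  "is_lca t S p \<longleftrightarrow> p \<in> pos t \<and> S \<subseteq> cl t p \<and> (\<forall>q\<in>pos t. S \<subseteq> cl t q \<longrightarrow> prefix q p)"

lemma lca_eqI: "is_lca t S p \<Longrightarrow> lca t S = p"
  unfolding lca_def by (rule the_equality) (auto simp: is_lca_def intro: prefix_order.antisym)

lemma is_lca_Nd_child:
  assumes d: "distinct (lvs (Nd ts))" and S: "S \<noteq> {}" and c: "c < length ts"
    and L: "is_lca (ts!c) S p"
  shows "is_lca (Nd ts) S (c # p)"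
  unfolding is_lca_def
proof (intro conjI ballI impI)
  show "c # p \<in> pos (Nd ts)" using L c mem_pos_Nd is_lca_def by auto
  show "S \<subseteq> cl (Nd ts) (c # p)" using L c cl_Nd_Cons is_lca_def by auto
  fix q assume q: "q \<in> pos (Nd ts)" and Sq: "S \<subseteq> cl (Nd ts) q"
  show "prefix q (c # p)"
  proof (cases q)
    case Nil then show ?thesis by simp
  next
    case (Cons d' q')
    then have d': "d' < length ts" and q': "q' \<in> pos (ts!d')" using q mem_pos_Nd by auto
    have Sq': "S \<subseteq> cl (ts!d') q'" using Sq Cons cl_Nd_Cons[OF d'] by simp
    have "S \<subseteq> set (lvs (ts!d'))" using Sq' cl_subset_lvs[OF q'] by auto
    moreover have "S \<subseteq> set (lvs (ts!c))" using L cl_subset_lvs is_lca_def by blast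
    moreover have "distinct (concat (map lvs ts))" using d by simp
    ultimately have "d' = c"
      using distinct_concat_nth_disjoint[of "map lvs ts" c d'] c d' S by auto
    then show ?thesis using L Cons q' Sq' is_lca_def by auto
  qed
qed

lemma is_lca_Nd_root:
  assumes "S \<subseteq> set (lvs (Nd ts))" and "\<forall>c<length ts. \<not> S \<subseteq> set (lvs (ts!c))"
  shows "is_lca (Nd ts) S []"
  unfolding is_lca_def
proof (intro conjI ballI impI)
  show "S \<subseteq> cl (Nd ts) []" using assms by simp
  fix q assume q: "q \<in> pos (Nd ts)" and Sq: "S \<subseteq> cl (Nd ts) q"
  show "prefix q []"
  proof (cases q)
    case Nil then show ?thesis by simp
  next
    case (Cons d' q')
    then have d': "d' < length ts" and q': "q' \<in> pos (ts!d')" using q mem_pos_Nd by auto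
    have "S \<subseteq> set (lvs (ts!d'))" using Sq Cons cl_Nd_Cons[OF d'] cl_subset_lvs[OF q'] by auto
    then show ?thesis using assms(2) d' by auto
  qed
qed simp

lemma is_lca_lca:
  assumes "distinct (lvs t)" "S \<noteq> {}" "S \<subseteq> set (lvs t)"
  shows "is_lca t S (lca t S)"
proof -
  have "\<exists>p. is_lca t S p"
    using assms
  proof (induction t)
    case (Lf v) then show ?case unfolding is_lca_def by auto
  next
    case (Nd ts)
    show ?case
    proof (cases "\<exists>c<length ts. S \<subseteq> set (lvs (ts!c))")
      case True
      then obtain c where c: "c < length ts" "S \<subseteq> set (lvs (ts!c))" by auto
      have "distinct (lvs (ts!c))"
        using Nd.prems(1) c(1) by (simp add: distinct_concat_iff)
      then obtain p where "is_lca (ts!c) S p" using Nd.IH[OF nth_mem[OF c(1)]] Nd.prems c by auto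
      then show ?thesis using is_lca_Nd_child[OF Nd.prems(1,2) c(1)] by blast
    next
      case False
      then show ?thesis using is_lca_Nd_root[OF Nd.prems(3)] by blast
    qed
  qed
  then show ?thesis using lca_eqI by blast
qed

lemma prefix_lca_mono:
  assumes "distinct (lvs t)" "S \<noteq> {}" "S \<subseteq> S'" "S' \<subseteq> set (lvs t)"
  shows "prefix (lca t S') (lca t S)"
  using is_lca_lca[of t S] is_lca_lca[of t S'] assms unfolding is_lca_def by blast

section \<open>The lower bound\<close>

lemma min_pair_sums_le_tcost:
  assumes d: "distinct (lvs T)" and ijk: "{i,j,k} \<subseteq> set (lvs T)"
    and nonneg: "0 \<le> w i j" "0 \<le> w i k" "0 \<le> w j k"
  shows "min (w i j + w i k) (min (w i j + w j k) (w i k + w j k)) \<le> tcost w T i j k"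
proof (cases "rel2 T i j k \<or> rel2 T i k j \<or> rel2 T j k i")
  case True then show ?thesis unfolding tcost_def by auto
next
  case False
  have "prefix (lca T {i,j,k}) (lca T {i,j})" "prefix (lca T {i,j,k}) (lca T {j,k})"
    using prefix_lca_mono[OF d] ijk by auto
  moreover have "{j,k,i} = {i,j,k}" by auto
  ultimately have "rel3 T i j k"
    using False unfolding rel2_def rel3_def by (auto simp: strict_prefix_def)
  then show ?thesis using False nonneg unfolding tcost_def by auto
qed

lemma BC_le_TC:
  assumes T: "hc_tree n T" and w: "\<forall>i<n. \<forall>j<n. 0 \<le> w i j"
  shows "BC n w \<le> TC n w T"
  unfolding BC_def TC_def
proof (rule sum_mono, clarify)
  fix i j k assume "(i,j,k) \<in> triples n"
  then show "min (w i j + w i k) (min (w i j + w j k) (w i k + w j k)) \<le> tcost w T i j k"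
    using T w min_pair_sums_le_tcost[of T i j k w] unfolding hc_tree_def triples_def by auto
qed

lemma BC_nonneg:
  assumes w: "\<forall>i<n. \<forall>j<n. 0 \<le> w i j"
  shows "0 \<le> BC n w"
  unfolding BC_def by (rule sum_nonneg) (use w in \<open>auto simp: triples_def\<close>)

lemma one_le_ratio:
  assumes T: "hc_tree n T" and w: "\<forall>i<n. \<forall>j<n. 0 \<le> w i j"
  shows "1 \<le> ratio n w T"
  using BC_le_TC[OF T w] BC_nonneg[OF w] unfolding ratio_def by (auto simp: field_simps)

lemma one_le_rho_star:
  assumes w: "\<forall>i<n. \<forall>j<n. 0 \<le> w i j"
  shows "1 \<le> rho_star n w"
  unfolding rho_star_def by (rule Inf_greatest) (use one_le_ratio w in auto)

lemma rho_star_le: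
  assumes T: "hc_tree n T" and w: "\<forall>i<n. \<forall>j<n. 0 \<le> w i j"
    and le: "TC n w T \<le> C * BC n w" and degenerate: "BC n w = 0 \<Longrightarrow> 1 \<le> C"
  shows "rho_star n w \<le> ereal C"
proof -
  have "rho_star n w \<le> ratio n w T"
    unfolding rho_star_def by (rule Inf_lower) (use T in auto)
  also have "ratio n w T \<le> ereal C"
  proof (cases "BC n w = 0")
    case True
    then show ?thesis using le BC_le_TC[OF T w] degenerate unfolding ratio_def by auto
  next
    case False
    then have "0 < BC n w" using BC_nonneg[OF w] by auto
    then show ?thesis using le unfolding ratio_def by (simp add: field_simps)
  qed
  finally show ?thesis .
qed

section \<open>Counting over subsets of fixed size\<close>

definition k_subsets :: "nat \<Rightarrow> 'a set \<Rightarrow> 'a set set" where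
  "k_subsets k V = {s. s \<subseteq> V \<and> card s = k}"

lemma finite_k_subsets [simp]: "finite V \<Longrightarrow> finite (k_subsets k V)"
  unfolding k_subsets_def by (rule finite_subset[of _ "Pow V"]) auto

lemma k_subsets_1: "k_subsets 1 U = (\<lambda>y. {y}) ` U"
  unfolding k_subsets_def by (auto simp: card_1_singleton_iff)

lemma sum_k_subsets_1: "(\<Sum>e\<in>k_subsets 1 U. f e) = (\<Sum>y\<in>U. f {y})"
  unfolding k_subsets_1 by (simp add: sum.reindex)

lemma sum_pointed_k_subsets:
  assumes V: "finite V"
  shows "(\<Sum>s\<in>k_subsets (Suc k) V. \<Sum>x\<in>s. h x (s - {x}))
       = (\<Sum>x\<in>V. \<Sum>e\<in>k_subsets k (V - {x}). h x e)"
proof -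
  have "(\<Sum>s\<in>k_subsets (Suc k) V. \<Sum>x\<in>s. h x (s - {x}))
      = (\<Sum>(s,x)\<in>Sigma (k_subsets (Suc k) V) (\<lambda>s. s). h x (s - {x}))"
    by (rule sum.Sigma) (use V in \<open>auto simp: k_subsets_def intro: finite_subset\<close>)
  also have "\<dots> = (\<Sum>(x,e)\<in>Sigma V (\<lambda>x. k_subsets k (V - {x})). h x e)"
  proof (rule sum.reindex_bij_witness[where i="\<lambda>(x,e). (insert x e, x)" and j="\<lambda>(s,x). (x, s - {x})"])
    fix a assume "a \<in> Sigma (k_subsets (Suc k) V) (\<lambda>s. s)"
    then obtain s x where [simp]: "a = (s,x)" and s: "s \<subseteq> V" "card s = Suc k" "x \<in> s"
      unfolding k_subsets_def by auto
    have "finite s" using s V finite_subset by auto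
    then show "(case case a of (s, x) \<Rightarrow> (x, s - {x}) of (x, e) \<Rightarrow> (insert x e, x)) = a"
      and "(case a of (s, x) \<Rightarrow> (x, s - {x})) \<in> Sigma V (\<lambda>x. k_subsets k (V - {x}))"
      using s unfolding k_subsets_def by auto
  next
    fix b assume "b \<in> Sigma V (\<lambda>x. k_subsets k (V - {x}))"
    then obtain x e where [simp]: "b = (x,e)" and e: "x \<in> V" "e \<subseteq> V - {x}" "card e = k"
      unfolding k_subsets_def by auto
    have "finite e" "x \<notin> e" using e V finite_subset by auto
    then show "(case case b of (x, e) \<Rightarrow> (insert x e, x) of (s, x) \<Rightarrow> (x, s - {x})) = b"
      and "(case b of (x, e) \<Rightarrow> (insert x e, x)) \<in> Sigma (k_subsets (Suc k) V) (\<lambda>s. s)"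
      using e unfolding k_subsets_def by auto
  qed auto
  also have "\<dots> = (\<Sum>x\<in>V. \<Sum>e\<in>k_subsets k (V - {x}). h x e)"
    by (rule sum.Sigma[symmetric]) (use V in auto)
  finally show ?thesis .
qed

lemma sum_k_subsets_2_sum:
  assumes U: "finite U"
  shows "(\<Sum>e\<in>k_subsets 2 U. \<Sum>y\<in>e. f y) = (real (card U) - 1) * (\<Sum>y\<in>U. f y)"
proof -
  have "(\<Sum>e\<in>k_subsets 2 U. \<Sum>y\<in>e. f y) = (\<Sum>y\<in>U. \<Sum>e\<in>k_subsets 1 (U - {y}). f y)"
    using sum_pointed_k_subsets[OF U, where k=1 and h="\<lambda>y _. f y"] by (simp only: Suc_1)
  also have "\<dots> = (\<Sum>y\<in>U. (real (card U) - 1) * f y)"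
  proof (rule sum.cong)
    fix y assume "y \<in> U"
    then have "card (k_subsets 1 (U - {y})) = card U - 1" and "card U \<ge> 1"
      using U unfolding k_subsets_1 by (auto simp: card_image Suc_le_eq card_gt_0_iff)
    then show "(\<Sum>e\<in>k_subsets 1 (U - {y}). f y) = (real (card U) - 1) * f y"
      by (simp add: of_nat_diff)
  qed simp
  finally show ?thesis by (simp add: sum_distrib_left)
qed

lemma sum_k_subsets_2_prod:
  fixes g :: "'a \<Rightarrow> real"
  assumes U: "finite U"
  shows "2 * (\<Sum>e\<in>k_subsets 2 U. \<Prod>y\<in>e. g y) = (\<Sum>y\<in>U. g y)^2 - (\<Sum>y\<in>U. (g y)^2)"
proof -
  have "2 * (\<Sum>e\<in>k_subsets 2 U. \<Prod>y\<in>e. g y)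
      = (\<Sum>e\<in>k_subsets 2 U. \<Sum>y\<in>e. g y * (\<Prod>z\<in>e - {y}. g z))"
    unfolding sum_distrib_left
  proof (rule sum.cong)
    fix e assume "e \<in> k_subsets 2 U"
    then have "finite e" "card e = 2" using U unfolding k_subsets_def by (auto intro: finite_subset)
    then show "2 * (\<Prod>y\<in>e. g y) = (\<Sum>y\<in>e. g y * (\<Prod>z\<in>e - {y}. g z))"
      by (simp add: prod.remove[symmetric])
  qed simp
  also have "\<dots> = (\<Sum>y\<in>U. \<Sum>e\<in>k_subsets 1 (U - {y}). g y * (\<Prod>z\<in>e. g z))"
    using sum_pointed_k_subsets[OF U, where k=1 and h="\<lambda>y e. g y * (\<Prod>z\<in>e. g z)"]
    by (simp only: Suc_1)
  also have "\<dots> = (\<Sum>y\<in>U. g y * ((\<Sum>z\<in>U. g z) - g y))"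
    using U unfolding sum_k_subsets_1
    by (intro sum.cong) (auto simp: sum_distrib_left[symmetric] sum_diff1)
  also have "\<dots> = (\<Sum>y\<in>U. g y)^2 - (\<Sum>y\<in>U. (g y)^2)"
    by (simp add: algebra_simps power2_eq_square sum_subtractf sum_distrib_left sum_distrib_right)
  finally show ?thesis .
qed

definition ordered_triples :: "nat set \<Rightarrow> (nat \<times> nat \<times> nat) set" where
  "ordered_triples V = {(i,j,k). i < j \<and> j < k \<and> i \<in> V \<and> j \<in> V \<and> k \<in> V}"

lemma triples_eq_ordered_triples: "triples n = ordered_triples {..<n}"
  unfolding triples_def ordered_triples_def by auto

lemma finite_ordered_triples [simp]: "finite V \<Longrightarrow> finite (ordered_triples V)"
  by (rule finite_subset[of _ "V \<times> V \<times> V"]) (auto simp: ordered_triples_def)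

lemma bij_betw_ordered_triples:
  "bij_betw (\<lambda>(i,j,k). {i,j,k}) (ordered_triples V) (k_subsets 3 V)"
  unfolding bij_betw_def
proof
  show "inj_on (\<lambda>(i,j,k). {i,j,k}) (ordered_triples V)"
  proof (rule inj_onI)
    fix x y assume x: "x \<in> ordered_triples V" and y: "y \<in> ordered_triples V"
      and "(\<lambda>(i,j,k). {i,j,k}) x = (\<lambda>(i,j,k). {i,j,k}) y"
    moreover obtain i j k i' j' k' where [simp]: "x = (i,j,k)" "y = (i',j',k')"
      by (cases x, cases y) auto
    ultimately have e: "{i,j,k} = {i',j',k'}" by simp
    have "i < j" "j < k" "i' < j'" "j' < k'" using x y unfolding ordered_triples_def by auto
    moreover have "i \<in> {i',j',k'}" "j \<in> {i',j',k'}" "k \<in> {i',j',k'}"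
       "i' \<in> {i,j,k}" "j' \<in> {i,j,k}" "k' \<in> {i,j,k}" using e by blast+
    ultimately show "x = y" by auto
  qed
  show "(\<lambda>(i,j,k). {i,j,k}) ` ordered_triples V = k_subsets 3 V"
  proof
    show "(\<lambda>(i,j,k). {i,j,k}) ` ordered_triples V \<subseteq> k_subsets 3 V"
      unfolding ordered_triples_def k_subsets_def by auto
    show "k_subsets 3 V \<subseteq> (\<lambda>(i,j,k). {i,j,k}) ` ordered_triples V"
    proof
      fix s assume s: "s \<in> k_subsets 3 V"
      then obtain x y z where xyz: "s = {x,y,z}" "x \<noteq> y" "y \<noteq> z" "x \<noteq> z"
        unfolding k_subsets_def by (auto simp: card_3_iff)
      moreover have "x < y \<or> y < x" "y < z \<or> z < y" "x < z \<or> z < x" using xyz by auto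
      ultimately have "\<exists>i j k. i < j \<and> j < k \<and> s = {i,j,k}"
        by (metis insert_commute)
      then obtain i j k where "i < j" "j < k" "s = {i,j,k}" by blast
      then show "s \<in> (\<lambda>(i,j,k). {i,j,k}) ` ordered_triples V"
        using s unfolding ordered_triples_def k_subsets_def
        by (auto intro!: image_eqI[of _ _ "(i,j,k)"])
    qed
  qed
qed

lemma sum_ordered_triples:
  "(\<Sum>(i,j,k)\<in>ordered_triples V. g {i,j,k}) = (\<Sum>s\<in>k_subsets 3 V. g s)"
  using sum.reindex_bij_betw[OF bij_betw_ordered_triples, of g V]
  by (simp add: case_prod_unfold)

lemma k_subsets_2_triple:
  fixes i j k :: nat
  assumes "i < j" "j < k"
  shows "k_subsets 2 {i,j,k} = {{i,j},{i,k},{j,k}}"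
proof
  have "i \<noteq> j" "i \<noteq> k" "j \<noteq> k" using assms by auto
  then show "{{i,j},{i,k},{j,k}} \<subseteq> k_subsets 2 {i,j,k}"
    unfolding k_subsets_def by auto
  show "k_subsets 2 {i,j,k} \<subseteq> {{i,j},{i,k},{j,k}}"
  proof
    fix s assume "s \<in> k_subsets 2 {i,j,k}"
    then obtain x y where "s = {x,y}" "x \<noteq> y" "x \<in> {i,j,k}" "y \<in> {i,j,k}"
      unfolding k_subsets_def by (auto simp: card_2_iff)
    then show "s \<in> {{i,j},{i,k},{j,k}}" by (auto simp: insert_commute)
  qed
qed

lemma sum_k_subsets_2_triple:
  fixes i j k :: nat
  assumes "i < j" "j < k"
  shows "(\<Sum>e\<in>k_subsets 2 {i,j,k}. f e) = f {i,j} + f {i,k} + f {j,k}"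
proof -
  have "{i,j} \<noteq> {i,k}" "{i,j} \<noteq> {j,k}" "{i,k} \<noteq> {j,k}"
    using assms by (auto simp: doubleton_eq_iff)
  then show ?thesis unfolding k_subsets_2_triple[OF assms] by (simp add: add.assoc)
qed

lemma card_Un_k_subsets_2:
  assumes "e \<in> k_subsets 2 V" "f \<in> k_subsets 2 V" "e \<noteq> f" "e \<inter> f \<noteq> {}"
  shows "card (e \<union> f) = 3"
proof -
  have e: "finite e" "card e = 2" and f: "finite f" "card f = 2"
    using assms(1,2) unfolding k_subsets_def by (auto intro: card_ge_0_finite)
  have "\<not> e \<subseteq> f" using card_subset_eq[OF f(1)] e f assms(3) by auto
  then have "e \<inter> f \<subset> e" by auto
  then have "card (e \<inter> f) < 2" using psubset_card_mono[OF e(1)] e by simp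
  moreover have "card (e \<inter> f) > 0" using assms(4) e by (simp add: card_gt_0_iff)
  ultimately have "card (e \<inter> f) = 1" by simp
  then show ?thesis using card_Un_Int[OF e(1) f(1)] e f by simp
qed

lemma card_k_subsets_3_supersets:
  assumes V: "finite V" and e: "e \<in> k_subsets 2 V"
  shows "card {s \<in> k_subsets 3 V. e \<subseteq> s} = card V - 2"
proof -
  have es: "e \<subseteq> V" "card e = 2" and fe: "finite e"
    using e V finite_subset unfolding k_subsets_def by auto
  have "{s \<in> k_subsets 3 V. e \<subseteq> s} = (\<lambda>x. insert x e) ` (V - e)"
  proof
    show "(\<lambda>x. insert x e) ` (V - e) \<subseteq> {s \<in> k_subsets 3 V. e \<subseteq> s}"
      using es fe unfolding k_subsets_def by auto
    show "{s \<in> k_subsets 3 V. e \<subseteq> s} \<subseteq> (\<lambda>x. insert x e) ` (V - e)"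
    proof
      fix s assume "s \<in> {s \<in> k_subsets 3 V. e \<subseteq> s}"
      then have s: "s \<subseteq> V" "card s = 3" "e \<subseteq> s" "finite s"
        using V finite_subset unfolding k_subsets_def by auto
      then have "card (s - e) = 1" using es fe by (simp add: card_Diff_subset)
      then obtain x where x: "s - e = {x}" by (auto simp: card_1_singleton_iff)
      then show "s \<in> (\<lambda>x. insert x e) ` (V - e)" using s by (intro image_eqI[of _ _ x]) auto
    qed
  qed
  moreover have "inj_on (\<lambda>x. insert x e) (V - e)"
    by (rule inj_onI) (auto simp: insert_ident)
  ultimately show ?thesis using es V fe by (simp add: card_image card_Diff_subset)
qed

lemma sum_k_subsets_3_2_swap:
  assumes V: "finite V"
  shows "(\<Sum>s\<in>k_subsets 3 V. \<Sum>e\<in>k_subsets 2 s. g e s)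
       = (\<Sum>e\<in>k_subsets 2 V. \<Sum>s\<in>{s \<in> k_subsets 3 V. e \<subseteq> s}. g e s)"
proof -
  have "k_subsets 2 s = {e \<in> k_subsets 2 V. e \<subseteq> s}" if "s \<in> k_subsets 3 V" for s
    using that unfolding k_subsets_def by auto
  then have "(\<Sum>s\<in>k_subsets 3 V. \<Sum>e\<in>k_subsets 2 s. g e s)
           = (\<Sum>s\<in>k_subsets 3 V. \<Sum>e\<in>{e \<in> k_subsets 2 V. e \<subseteq> s}. g e s)"
    by simp
  also have "\<dots> = (\<Sum>e\<in>k_subsets 2 V. \<Sum>s\<in>{s \<in> k_subsets 3 V. e \<subseteq> s}. g e s)"
    by (rule sum.swap_restrict) (use V in auto)
  finally show ?thesis .
qed

lemma sum_k_subsets_3_2: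
  assumes V: "finite V"
  shows "(\<Sum>s\<in>k_subsets 3 V. \<Sum>e\<in>k_subsets 2 s. g e)
       = (real (card V) - 2) * (\<Sum>e\<in>k_subsets 2 V. g e)"
proof -
  have "(\<Sum>s\<in>{s \<in> k_subsets 3 V. e \<subseteq> s}. g e) = (real (card V) - 2) * g e"
    if e: "e \<in> k_subsets 2 V" for e
  proof -
    have "e \<subseteq> V" "card e = 2" using e unfolding k_subsets_def by auto
    then have "2 \<le> card V" using V card_mono by metis
    then show ?thesis using card_k_subsets_3_supersets[OF V e] by (simp add: of_nat_diff)
  qed
  then show ?thesis
    unfolding sum_k_subsets_3_2_swap[OF V] sum_distrib_left by (rule sum.cong[OF refl])
qed

section \<open>Caterpillar trees\<close>

lemma strict_prefix_Cons_Cons [simp]: "strict_prefix (a # xs) (a # ys) \<longleftrightarrow> strict_prefix xs ys"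
  by (auto simp: strict_prefix_def)

lemma lca_attach_leaf_inner:
  assumes d: "distinct (lvs T)" and v: "v \<notin> set (lvs T)" and S: "S \<noteq> {}" "S \<subseteq> set (lvs T)"
  shows "lca (Nd [T, Lf v]) S = 0 # lca T S"
proof -
  have "distinct (lvs (Nd [T, Lf v]))" using d v by simp
  then have "is_lca (Nd [T, Lf v]) S (0 # lca T S)"
    using is_lca_Nd_child[of "[T, Lf v]" S 0] is_lca_lca[OF d S] S by simp
  then show ?thesis by (rule lca_eqI)
qed

lemma lca_attach_leaf_root:
  assumes "v \<notin> set (lvs T)" "S \<subseteq> insert v (set (lvs T))" "v \<in> S" "x \<in> S" "x \<noteq> v"
  shows "lca (Nd [T, Lf v]) S = []"
proof -
  have "\<not> S \<subseteq> set (lvs ([T, Lf v] ! c))" if "c < 2" for c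
    using that assms by (cases c) auto
  then have "is_lca (Nd [T, Lf v]) S []"
    using assms by (intro is_lca_Nd_root) auto
  then show ?thesis by (rule lca_eqI)
qed

lemma tcost_attach_leaf_inner:
  assumes d: "distinct (lvs T)" and v: "v \<notin> set (lvs T)"
    and ijk: "i \<in> set (lvs T)" "j \<in> set (lvs T)" "k \<in> set (lvs T)"
  shows "tcost w (Nd [T, Lf v]) i j k = tcost w T i j k"
  using lca_attach_leaf_inner[OF d v] ijk unfolding tcost_def rel2_def rel3_def by simp

lemma tcost_attach_leaf_new:
  assumes d: "distinct (lvs T)" and v: "v \<notin> set (lvs T)"
    and o: "i < j" "j < k" and ijk: "{i,j,k} \<subseteq> insert v (set (lvs T))" and vin: "v \<in> {i,j,k}"
    and sym: "w i j = w j i" "w i k = w k i" "w j k = w k j"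
  shows "tcost w (Nd [T, Lf v]) i j k = (\<Sum>y\<in>{i,j,k} - {v}. w v y)"
proof -
  let ?T = "Nd [T, Lf v]"
  consider "v = i" | "v = j" | "v = k" using vin by auto
  then show ?thesis
  proof cases
    case 1
    then have "lca ?T {i,j} = []" "lca ?T {i,k} = []" "lca ?T {j,k,i} = []"
      using lca_attach_leaf_root[OF v, of "{i,j}" j] lca_attach_leaf_root[OF v, of "{i,k}" k]
        lca_attach_leaf_root[OF v, of "{j,k,i}" j] ijk o by auto
    moreover have "lca ?T {j,k} = 0 # lca T {j,k}"
      using lca_attach_leaf_inner[OF d v] ijk 1 o by auto
    moreover have "{i,j,k} - {v} = {j,k}" using 1 o by auto
    ultimately show ?thesis unfolding tcost_def rel2_def using 1 o sym
      by (auto simp: insert_commute)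
  next
    case 2
    then have "lca ?T {i,j} = []" "lca ?T {i,j,k} = []"
      using lca_attach_leaf_root[OF v, of "{i,j}" i] lca_attach_leaf_root[OF v, of "{i,j,k}" i]
        ijk o by auto
    moreover have "lca ?T {i,k} = 0 # lca T {i,k}"
      using lca_attach_leaf_inner[OF d v] ijk 2 o by auto
    moreover have "{i,j,k} - {v} = {i,k}" using 2 o by auto
    ultimately show ?thesis unfolding tcost_def rel2_def using 2 o sym
      by (auto simp: insert_commute)
  next
    case 3
    then have "lca ?T {i,j,k} = []"
      using lca_attach_leaf_root[OF v, of "{i,j,k}" i] ijk o by auto
    moreover have "lca ?T {i,j} = 0 # lca T {i,j}"
      using lca_attach_leaf_inner[OF d v] ijk 3 o by auto
    moreover have "{i,j,k} - {v} = {i,j}" using 3 o by auto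
    ultimately show ?thesis unfolding tcost_def rel2_def using 3 o sym
      by (auto simp: insert_commute)
  qed
qed

definition weighted_degree :: "(nat \<Rightarrow> nat \<Rightarrow> real) \<Rightarrow> nat set \<Rightarrow> nat \<Rightarrow> real" where
  "weighted_degree w V x = (\<Sum>y\<in>V - {x}. w x y)"

definition volume :: "(nat \<Rightarrow> nat \<Rightarrow> real) \<Rightarrow> nat set \<Rightarrow> real" where
  "volume w V = (\<Sum>x\<in>V. weighted_degree w V x)"

definition TC_on :: "(nat \<Rightarrow> nat \<Rightarrow> real) \<Rightarrow> nat set \<Rightarrow> htree \<Rightarrow> real" where
  "TC_on w V T = (\<Sum>(i,j,k)\<in>ordered_triples V. tcost w T i j k)"

lemma TC_eq_TC_on: "TC n w T = TC_on w {..<n} T"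
  unfolding TC_def TC_on_def triples_eq_ordered_triples ..

lemma volume_remove:
  assumes V: "finite V" and v: "v \<in> V" and sym: "\<forall>x\<in>V. \<forall>y\<in>V. w x y = w y x"
  shows "volume w V = volume w (V - {v}) + 2 * weighted_degree w V v"
proof -
  let ?V' = "V - {v}"
  have "weighted_degree w V x = w x v + weighted_degree w ?V' x" if "x \<in> ?V'" for x
  proof -
    have "V - {x} = insert v (?V' - {x})" using that v by auto
    then show ?thesis unfolding weighted_degree_def using V by (simp add: Diff_insert_absorb)
  qed
  then have "(\<Sum>x\<in>?V'. weighted_degree w V x) = (\<Sum>x\<in>?V'. w v x) + volume w ?V'"
    unfolding volume_def sum.distrib[symmetric] using sym v by (intro sum.cong) auto
  moreover have "(\<Sum>x\<in>?V'. w v x) = weighted_degree w V v"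
    unfolding weighted_degree_def ..
  moreover have "volume w V = weighted_degree w V v + (\<Sum>x\<in>?V'. weighted_degree w V x)"
    unfolding volume_def using sum.remove[OF V v] .
  ultimately show ?thesis by simp
qed

lemma sum_ordered_triples_containing:
  assumes V: "finite V" and v: "v \<in> V"
  shows "(\<Sum>(i,j,k)\<in>ordered_triples V. if v \<in> {i,j,k} then G {i,j,k} else 0)
       = (\<Sum>e\<in>k_subsets 2 (V - {v}). G (insert v e))"
proof -
  have "(\<Sum>(i,j,k)\<in>ordered_triples V. if v \<in> {i,j,k} then G {i,j,k} else 0)
      = (\<Sum>s\<in>k_subsets (Suc 2) V. \<Sum>x\<in>s. if x = v then G (insert x (s - {x})) else 0)"
    unfolding sum_ordered_triples[of "\<lambda>s. if v \<in> s then G s else 0"]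
  proof (rule sum.cong)
    fix s assume "s \<in> k_subsets (Suc 2) V"
    then have "finite s" using V unfolding k_subsets_def by (auto intro: finite_subset)
    then show "(if v \<in> s then G s else 0)
             = (\<Sum>x\<in>s. if x = v then G (insert x (s - {x})) else 0)"
      by (simp add: insert_absorb)
  qed simp
  also have "\<dots> = (\<Sum>x\<in>V. \<Sum>e\<in>k_subsets 2 (V - {x}). if x = v then G (insert x e) else 0)"
    by (rule sum_pointed_k_subsets[OF V])
  also have "\<dots> = (\<Sum>x\<in>V. if x = v then (\<Sum>e\<in>k_subsets 2 (V - {x}). G (insert x e)) else 0)"
    by (rule sum.cong) auto
  also have "\<dots> = (\<Sum>e\<in>k_subsets 2 (V - {v}). G (insert v e))"
    using V v by simp
  finally show ?thesis .
qed

lemma tcost_attach_leaf: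
  assumes T: "distinct (lvs T)" "set (lvs T) = V - {v}"
    and sym: "\<forall>x\<in>V. \<forall>y\<in>V. w x y = w y x" and ijk: "(i,j,k) \<in> ordered_triples V"
  shows "tcost w (Nd [T, Lf v]) i j k
       = (if v \<in> {i,j,k} then (\<Sum>y\<in>{i,j,k} - {v}. w v y) else tcost w T i j k)"
proof -
  have vT: "v \<notin> set (lvs T)" using T by auto
  have o: "i < j" "j < k" and V: "{i,j,k} \<subseteq> V" using ijk unfolding ordered_triples_def by auto
  show ?thesis
  proof (cases "v \<in> {i,j,k}")
    case True
    have "w i j = w j i" "w i k = w k i" "w j k = w k j" using sym V by auto
    then show ?thesis using tcost_attach_leaf_new[OF T(1) vT o] True V T(2) by auto
  next
    case False
    then show ?thesis using tcost_attach_leaf_inner[OF T(1) vT] V T(2) by auto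
  qed
qed

lemma TC_on_attach_leaf:
  assumes V: "finite V" and v: "v \<in> V"
    and T: "distinct (lvs T)" "set (lvs T) = V - {v}"
    and sym: "\<forall>x\<in>V. \<forall>y\<in>V. w x y = w y x"
  shows "TC_on w V (Nd [T, Lf v]) = (real (card V) - 2) * weighted_degree w V v + TC_on w (V - {v}) T"
proof -
  define G where "G s = (\<Sum>y\<in>s - {v}. w v y)" for s
  have "TC_on w V (Nd [T, Lf v])
      = (\<Sum>(i,j,k)\<in>ordered_triples V. if v \<in> {i,j,k} then G {i,j,k} else 0)
        + (\<Sum>(i,j,k)\<in>ordered_triples V. if v \<in> {i,j,k} then 0 else tcost w T i j k)"
    unfolding TC_on_def sum.distrib[symmetric]
    by (rule sum.cong) (auto simp: tcost_attach_leaf[OF T sym] G_def)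
  moreover have "(\<Sum>(i,j,k)\<in>ordered_triples V. if v \<in> {i,j,k} then G {i,j,k} else 0)
      = (\<Sum>e\<in>k_subsets 2 (V - {v}). G (insert v e))"
    by (rule sum_ordered_triples_containing[OF V v])
  moreover have "\<dots> = (\<Sum>e\<in>k_subsets 2 (V - {v}). \<Sum>y\<in>e. w v y)"
    unfolding G_def by (intro sum.cong) (auto simp: k_subsets_def)
  moreover have "\<dots> = (real (card V) - 2) * weighted_degree w V v"
    using sum_k_subsets_2_sum[of "V - {v}" "w v"] card_Suc_Diff1[OF V v] V
    by (simp add: weighted_degree_def)
  moreover have "(\<Sum>(i,j,k)\<in>ordered_triples V. if v \<in> {i,j,k} then 0 else tcost w T i j k)
      = TC_on w (V - {v}) T"
    unfolding TC_on_def
    by (rule sum.mono_neutral_cong_right)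
      (use finite_ordered_triples[OF V] in \<open>auto simp: ordered_triples_def\<close>)
  ultimately show ?thesis by simp
qed

lemma caterpillar_tree_exists:
  assumes "finite V" "V \<noteq> {}" and "\<forall>x\<in>V. \<forall>y\<in>V. w x y = w y x"
  shows "\<exists>T. wf_ht T \<and> distinct (lvs T) \<and> set (lvs T) = V \<and>
             3 * TC_on w V T \<le> (real (card V) - 2) * volume w V"
proof -
  obtain n where "card V = Suc n" using assms(1,2) by (metis card_gt_0_iff gr0_implies_Suc)
  with assms show ?thesis
  proof (induction n arbitrary: V)
    case 0
    then obtain v where V: "V = {v}" by (metis One_nat_def card_1_singletonE)
    have "ordered_triples V = {}" unfolding ordered_triples_def V by auto
    then show ?case using V by (intro exI[of _ "Lf v"]) (simp add: TC_on_def volume_def weighted_degree_def)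
  next
    case (Suc n)
    note V = Suc.prems(1) and sym = Suc.prems(3) and cV = Suc.prems(4)
    obtain v where v: "v \<in> V" and v_min: "\<forall>x\<in>V. weighted_degree w V v \<le> weighted_degree w V x"
      using Suc.prems(2) V by (metis arg_min_if_finite(1,2) not_less)
    have cV': "card (V - {v}) = Suc n" using V v cV by simp
    then have "V - {v} \<noteq> {}" by (metis card.empty Zero_not_Suc)
    then obtain T where T: "wf_ht T" "distinct (lvs T)" "set (lvs T) = V - {v}"
       "3 * TC_on w (V - {v}) T \<le> (real (card (V - {v})) - 2) * volume w (V - {v})"
      using Suc.IH[of "V - {v}"] V cV' sym by blast
    let ?N = "real (card V)" and ?d = "weighted_degree w V v"
    have min: "?N * ?d \<le> volume w V"
      unfolding volume_def using sum_mono[of V "\<lambda>_. ?d" "weighted_degree w V"] v_min by simp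
    have card: "real (card (V - {v})) = ?N - 1" using card_Suc_Diff1[OF V v] by simp
    have "3 * TC_on w V (Nd [T, Lf v]) = 3 * (?N - 2) * ?d + 3 * TC_on w (V - {v}) T"
      using TC_on_attach_leaf[OF V v T(2,3) sym] by simp
    also have "\<dots> \<le> 3 * (?N - 2) * ?d + (?N - 3) * volume w (V - {v})"
      using T(4) card by simp
    also have "\<dots> = (?N - 3) * volume w V + ?N * ?d"
      using volume_remove[OF V v sym] by (simp add: algebra_simps)
    also have "\<dots> \<le> (?N - 2) * volume w V"
      using min by (simp add: algebra_simps)
    finally have "3 * TC_on w V (Nd [T, Lf v]) \<le> (?N - 2) * volume w V" .
    moreover have "wf_ht (Nd [T, Lf v])" "distinct (lvs (Nd [T, Lf v]))"
      "set (lvs (Nd [T, Lf v])) = V" using T v by auto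
    ultimately show ?case by blast
  qed
qed

section \<open>Unweighted connected graphs\<close>

lemma unw_commute: "unw E i j = unw E j i"
  unfolding unw_def by (simp add: insert_commute)

lemma unw_cases: "unw E i j = 0 \<or> unw E i j = 1"
  unfolding unw_def by simp

lemma unw_nonneg: "0 \<le> unw E i j"
  unfolding unw_def by simp

lemma sum_degree_squares_le_BC_unw:
  "(\<Sum>x<n. (weighted_degree (unw E) {..<n} x)^2 - weighted_degree (unw E) {..<n} x) \<le> 3 * BC n (unw E)"
proof -
  let ?V = "{..<n}" and ?w = "unw E"
  define paths where "paths s = (\<Sum>x\<in>s. \<Prod>y\<in>s - {x}. ?w x y)" for s
  have triple: "2 * paths {i,j,k} \<le> 3 * min (?w i j + ?w i k) (min (?w i j + ?w j k) (?w i k + ?w j k))"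
    if "(i,j,k) \<in> ordered_triples ?V" for i j k
  proof -
    have "i < j" "j < k" using that unfolding ordered_triples_def by auto
    then have "{i,j,k} - {i} = {j,k}" "{i,j,k} - {j} = {i,k}" "{i,j,k} - {k} = {i,j}" by auto
    then have "paths {i,j,k} = ?w i j * ?w i k + ?w j i * ?w j k + ?w k i * ?w k j"
      using \<open>i < j\<close> \<open>j < k\<close> unfolding paths_def by (simp add: insert_Diff_if)
    moreover have "?w j i = ?w i j" "?w k i = ?w i k" "?w k j = ?w j k"
      using unw_commute by metis+
    moreover have "?w i j = 0 \<or> ?w i j = 1" "?w i k = 0 \<or> ?w i k = 1" "?w j k = 0 \<or> ?w j k = 1"
      using unw_cases by metis+
    ultimately show ?thesis by auto
  qed
  have "2 * (\<Sum>s\<in>k_subsets 3 ?V. paths s) = (\<Sum>(i,j,k)\<in>ordered_triples ?V. 2 * paths {i,j,k})"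
    unfolding sum_ordered_triples[symmetric] sum_distrib_left by (simp add: case_prod_unfold)
  also have "\<dots> \<le> 3 * BC n ?w"
    unfolding BC_def triples_eq_ordered_triples sum_distrib_left
    by (rule sum_mono) (use triple in auto)
  finally have le: "2 * (\<Sum>s\<in>k_subsets 3 ?V. paths s) \<le> 3 * BC n ?w" .
  have "(\<Sum>s\<in>k_subsets 3 ?V. paths s)
      = (\<Sum>x\<in>?V. \<Sum>e\<in>k_subsets 2 (?V - {x}). \<Prod>y\<in>e. ?w x y)"
    using sum_pointed_k_subsets[of ?V, where k=2 and h="\<lambda>x e. \<Prod>y\<in>e. ?w x y"]
    unfolding paths_def by simp
  moreover have "2 * (\<Sum>e\<in>k_subsets 2 (?V - {x}). \<Prod>y\<in>e. ?w x y)
      = (weighted_degree ?w ?V x)^2 - weighted_degree ?w ?V x" for x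
  proof -
    have "(?w x y)^2 = ?w x y" for y using unw_cases[of E x y] by auto
    then show ?thesis using sum_k_subsets_2_prod[of "?V - {x}" "?w x"] unfolding weighted_degree_def by simp
  qed
  ultimately show ?thesis using le by (simp add: sum_distrib_left)
qed

lemma sum_square_le_card_mult_sum_squares:
  fixes d :: "'a \<Rightarrow> real"
  assumes "finite V"
  shows "(\<Sum>x\<in>V. d x)^2 \<le> real (card V) * (\<Sum>x\<in>V. (d x)^2)"
proof (cases "V = {}")
  case False
  let ?N = "real (card V)" and ?S = "\<Sum>x\<in>V. d x"
  have N: "?N > 0" using assms False by (simp add: card_gt_0_iff)
  have "0 \<le> (\<Sum>x\<in>V. (?N * d x - ?S)^2)" by (simp add: sum_nonneg)
  also have "\<dots> = (\<Sum>x\<in>V. ?N^2 * (d x)^2 - (2 * ?N * ?S) * d x + ?S^2)"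
    by (rule sum.cong) (simp_all add: power2_eq_square algebra_simps)
  also have "\<dots> = ?N^2 * (\<Sum>x\<in>V. (d x)^2) - (2 * ?N * ?S) * ?S + ?N * ?S^2"
    by (simp add: sum.distrib sum_subtractf sum_distrib_left)
  finally have "?N * ?S^2 \<le> ?N^2 * (\<Sum>x\<in>V. (d x)^2)"
    by (simp add: power2_eq_square algebra_simps)
  then show ?thesis using N by (simp add: power2_eq_square mult.assoc)
qed simp

lemma volume_unw:
  assumes "simple_graph n E"
  shows "volume (unw E) {..<n} = 2 * real (card E)"
proof -
  let ?V = "{..<n}"
  have E: "E \<subseteq> k_subsets 2 ?V" using assms unfolding simple_graph_def k_subsets_def by auto
  have "volume (unw E) ?V
      = (\<Sum>x\<in>?V. \<Sum>e\<in>k_subsets 1 (?V - {x}). if insert x e \<in> E then 1 else 0)"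
    unfolding volume_def weighted_degree_def sum_k_subsets_1 unw_def ..
  also have "\<dots> = (\<Sum>s\<in>k_subsets 2 ?V. \<Sum>x\<in>s. if insert x (s - {x}) \<in> E then 1 else 0)"
    using sum_pointed_k_subsets[of ?V, where k=1 and h="\<lambda>x e. if insert x e \<in> E then 1 else (0::real)"]
    by (simp only: Suc_1 finite_lessThan)
  also have "\<dots> = (\<Sum>s\<in>k_subsets 2 ?V. 2 * (if s \<in> E then 1 else 0))"
  proof (rule sum.cong)
    fix s assume "s \<in> k_subsets 2 ?V"
    then have "card s = 2" "finite s" unfolding k_subsets_def by (auto intro: finite_subset)
    then show "(\<Sum>x\<in>s. if insert x (s - {x}) \<in> E then 1 else 0) = 2 * (if s \<in> E then 1 else (0::real))"
      by (simp add: insert_absorb)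
  qed simp
  also have "\<dots> = 2 * real (card E)"
    using E by (simp add: sum_distrib_left[symmetric] sum.If_cases Int_absorb1)
  finally show ?thesis .
qed

lemma connected_graph_neighbour:
  assumes sg: "simple_graph n E" and cg: "connected_graph n E" and n: "2 \<le> n" and x: "x < n"
  obtains z where "{x,z} \<in> E" "z \<noteq> x" "z < n"
proof -
  define y where "y = (if x = 0 then 1 else (0::nat))"
  have y: "y < n" "y \<noteq> x" using n x unfolding y_def by auto
  have "(x,y) \<in> {(a, b). {a, b} \<in> E}\<^sup>*" using cg x y unfolding connected_graph_def by auto
  then obtain z where z: "{x,z} \<in> E"
    using y(2) by (cases rule: converse_rtranclE) auto
  moreover obtain a b where "{x,z} = {a,b}" "a \<noteq> b" "a < n" "b < n"
    using sg z unfolding simple_graph_def by blast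
  ultimately have "z \<noteq> x" "z < n" using x by (auto simp: doubleton_eq_iff)
  then show ?thesis using that z by blast
qed

lemma one_le_degree_unw:
  assumes "simple_graph n E" "connected_graph n E" "2 \<le> n" "x < n"
  shows "1 \<le> weighted_degree (unw E) {..<n} x"
proof -
  obtain z where z: "{x,z} \<in> E" "z \<noteq> x" "z < n"
    using connected_graph_neighbour[OF assms] .
  have "unw E x z \<le> weighted_degree (unw E) {..<n} x" unfolding weighted_degree_def
    by (rule member_le_sum) (use z unw_nonneg in auto)
  then show ?thesis using z unfolding unw_def by simp
qed

lemma degree_unw_le_1_neighbour_unique:
  assumes "weighted_degree (unw E) {..<n} x \<le> 1"
    and a: "{x,a} \<in> E" "a \<noteq> x" "a < n" and b: "{x,b} \<in> E" "b \<noteq> x" "b < n"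
  shows "a = b"
proof (rule ccontr)
  assume ab: "a \<noteq> b"
  have "(\<Sum>y\<in>{a,b}. unw E x y) \<le> weighted_degree (unw E) {..<n} x" unfolding weighted_degree_def
    by (rule sum_mono2) (use a b unw_nonneg in auto)
  then show False using ab a b assms(1) unfolding unw_def by simp
qed

lemma card_le_2_if_degrees_unw_le_1:
  assumes sg: "simple_graph n E" and cg: "connected_graph n E"
    and le1: "\<And>x. x < n \<Longrightarrow> weighted_degree (unw E) {..<n} x \<le> 1"
  shows "n \<le> 2"
proof (rule ccontr)
  assume "\<not> n \<le> 2"
  then have n: "3 \<le> n" and n0: "0 < n" by auto
  obtain p where p: "{0,p} \<in> E" "p \<noteq> 0" "p < n"
    using connected_graph_neighbour[OF sg cg _ n0] n by auto
  have "y = 0 \<or> y = p" if "(0,y) \<in> {(a, b). {a, b} \<in> E}\<^sup>*" for y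
    using that
  proof (induction rule: rtrancl_induct)
    case (step y z)
    then have yz: "{y,z} \<in> E" by simp
    then obtain a b where "{y,z} = {a,b}" "a \<noteq> b" "a < n" "b < n"
      using sg unfolding simple_graph_def by blast
    then have yzn: "y < n" "z < n" "y \<noteq> z" by (auto simp: doubleton_eq_iff)
    show ?case
    proof (cases "y = 0")
      case True
      then show ?thesis
        using degree_unw_le_1_neighbour_unique[OF le1[OF n0], of z p] yz yzn p by auto
    next
      case False
      then have "y = p" using step.IH by simp
      moreover have "{p,0} \<in> E" using p by (simp add: insert_commute)
      ultimately show ?thesis
        using degree_unw_le_1_neighbour_unique[OF le1[OF p(3)], of z 0] yz yzn p by auto
    qed
  qed simp
  moreover define q where "q = (if p = 1 then 2 else (1::nat))"
  then have "q < n" "q \<noteq> 0" "q \<noteq> p" using n by auto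
  moreover have "(0,q) \<in> {(a, b). {a, b} \<in> E}\<^sup>*"
    using cg \<open>q < n\<close> n0 unfolding connected_graph_def by blast
  ultimately show False by blast
qed

lemma card_lt_volume_unw:
  assumes sg: "simple_graph n E" and cg: "connected_graph n E" and n: "3 \<le> n"
  shows "real n < volume (unw E) {..<n}"
proof (rule ccontr)
  let ?d = "weighted_degree (unw E) {..<n}"
  assume "\<not> real n < volume (unw E) {..<n}"
  then have vol: "volume (unw E) {..<n} \<le> real n" by simp
  have ge1: "1 \<le> ?d x" if "x < n" for x using one_le_degree_unw[OF sg cg _ that] n by simp
  have "?d x \<le> 1" if x: "x < n" for x
  proof -
    have "volume (unw E) {..<n} = ?d x + (\<Sum>y\<in>{..<n} - {x}. ?d y)"
      unfolding volume_def using sum.remove[of "{..<n}" x ?d] x by simp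
    moreover have "(\<Sum>y\<in>{..<n} - {x}. ?d y) \<ge> (\<Sum>y\<in>{..<n} - {x}. 1)"
      by (rule sum_mono) (use ge1 in auto)
    ultimately show ?thesis using vol x by simp
  qed
  then show False using card_le_2_if_degrees_unw_le_1[OF sg cg] n by force
qed

lemma rho_star_unw_le:
  assumes n: "3 \<le> n" and sg: "simple_graph n E" and cg: "connected_graph n E"
  shows "rho_star n (unw E) \<le> ereal ((real n ^ 2 - 2 * real n) / (2 * real (card E) - real n))"
proof -
  let ?w = "unw E" and ?V = "{..<n}"
  define N W B where "N = real n" and "W = volume ?w ?V" and "B = BC n ?w"
  have "\<forall>x\<in>?V. \<forall>y\<in>?V. ?w x y = ?w y x" using unw_commute by blast
  moreover have "?V \<noteq> {}" using n by (simp add: lessThan_empty_iff)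
  ultimately obtain T where T: "wf_ht T" "distinct (lvs T)" "set (lvs T) = ?V"
      "3 * TC_on ?w ?V T \<le> (N - 2) * W"
    using caterpillar_tree_exists[of ?V ?w] unfolding N_def W_def by auto
  have N3: "3 \<le> N" and WN: "N < W" and W: "W = 2 * real (card E)"
    using n card_lt_volume_unw[OF sg cg n] volume_unw[OF sg] unfolding N_def W_def by auto
  have "W^2 \<le> N * (\<Sum>x<n. (weighted_degree ?w ?V x)^2)"
    using sum_square_le_card_mult_sum_squares[of ?V "weighted_degree ?w ?V"] unfolding W_def N_def volume_def
    by simp
  moreover have "(\<Sum>x<n. (weighted_degree ?w ?V x)^2) \<le> 3 * B + W"
    using sum_degree_squares_le_BC_unw[where n=n and E=E] unfolding B_def W_def volume_def
    by (simp add: sum_subtractf)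
  ultimately have "W * (W - N) \<le> 3 * N * B"
    using N3 mult_left_mono[of _ _ N] by (fastforce simp: algebra_simps power2_eq_square)
  then have B: "W * (W - N) / (3 * N) \<le> B" using N3 by (simp add: field_simps)
  have "(N - 2) * W / 3 = (N^2 - 2 * N) / (W - N) * (W * (W - N) / (3 * N))"
    using N3 WN by (simp add: field_simps power2_eq_square)
  also have "\<dots> \<le> (N^2 - 2 * N) / (W - N) * B"
    using N3 WN by (intro mult_left_mono[OF B]) (simp add: power2_eq_square)
  finally have "TC n ?w T \<le> (N^2 - 2 * N) / (W - N) * B"
    using T(4) unfolding TC_eq_TC_on by linarith
  moreover have "0 < B"
  proof -
    have "0 < W * (W - N) / (3 * N)" using WN N3 by simp
    then show ?thesis using B by linarith
  qed
  moreover have "hc_tree n T" using T unfolding hc_tree_def by simp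
  ultimately show ?thesis
    using rho_star_le[of n T ?w] unw_nonneg unfolding N_def B_def W by simp
qed

section \<open>Trees of depth two\<close>

definition two_level :: "nat list list \<Rightarrow> htree" where
  "two_level bs = Nd (map (\<lambda>b. Nd (map Lf b)) bs)"

lemma lvs_Nd_map_Lf [simp]: "lvs (Nd (map Lf b)) = b"
  by (induction b) auto

lemma lvs_two_level [simp]: "lvs (two_level bs) = concat bs"
  unfolding two_level_def by (simp add: comp_def)

lemma lca_two_level_block:
  assumes d: "distinct (concat bs)" and b: "b \<in> set bs"
    and S: "S \<subseteq> set b" "x \<in> S" "y \<in> S" "x \<noteq> y"
  shows "\<exists>c. lca (two_level bs) S = [c]"
proof -
  obtain c where c: "c < length bs" "bs ! c = b" using b by (auto simp: in_set_conv_nth)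
  have "\<forall>d<length b. \<not> S \<subseteq> set (lvs (map Lf b ! d))" using S by auto
  then have "is_lca (Nd (map Lf b)) S []" using S by (intro is_lca_Nd_root) auto
  then have "is_lca (two_level bs) S [c]" unfolding two_level_def
    by (intro is_lca_Nd_child) (use d S c in \<open>auto simp: comp_def\<close>)
  then show ?thesis using lca_eqI by blast
qed

lemma lca_two_level_root:
  assumes "S \<subseteq> set (concat bs)" and "\<forall>b\<in>set bs. \<not> S \<subseteq> set b"
  shows "lca (two_level bs) S = []"
  unfolding two_level_def
  by (rule lca_eqI, rule is_lca_Nd_root) (use assms in \<open>auto simp: comp_def\<close>)

lemma rel2_two_level:
  assumes d: "distinct (concat bs)" and small: "\<forall>b\<in>set bs. length b \<le> 2"
    and ijk: "{i,j,k} \<subseteq> set (concat bs)" "i \<noteq> j" "i \<noteq> k" "j \<noteq> k"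
  shows "rel2 (two_level bs) i j k \<longleftrightarrow> (\<exists>b\<in>set bs. {i,j} \<subseteq> set b)"
proof -
  have "\<not> {i,j,k} \<subseteq> set b" if "b \<in> set bs" for b
  proof
    assume "{i,j,k} \<subseteq> set b"
    then have "card {i,j,k} \<le> card (set b)" by (simp add: card_mono)
    also have "\<dots> \<le> 2" using card_length[of b] small that by fastforce
    finally show False using ijk by simp
  qed
  then have root: "lca (two_level bs) {i,j,k} = []" using lca_two_level_root[OF ijk(1)] by blast
  show ?thesis
  proof (cases "\<exists>b\<in>set bs. {i,j} \<subseteq> set b")
    case True
    then obtain b where "b \<in> set bs" "{i,j} \<subseteq> set b" by blast
    then obtain c where "lca (two_level bs) {i,j} = [c]"
      using lca_two_level_block[OF d, of b "{i,j}" i j] ijk by auto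
    then show ?thesis using True root unfolding rel2_def by (simp add: strict_prefix_def)
  next
    case False
    then have "lca (two_level bs) {i,j} = []" using lca_two_level_root[of "{i,j}" bs] ijk by auto
    then show ?thesis using False root unfolding rel2_def by simp
  qed
qed

lemma partition_tree_exists:
  assumes P: "partition_on {..<n} P" and small: "\<forall>b\<in>P. card b \<le> 2" and n: "0 < n"
  obtains T where "hc_tree n T"
    and "\<And>i j k. i < n \<Longrightarrow> j < n \<Longrightarrow> k < n \<Longrightarrow> i \<noteq> j \<Longrightarrow> i \<noteq> k \<Longrightarrow> j \<noteq> k \<Longrightarrow>
           rel2 T i j k \<longleftrightarrow> (\<exists>b\<in>P. {i,j} \<subseteq> b)"
proof -
  have fin: "finite b" if "b \<in> P" for b
    using that partition_onD1[OF P] finite_subset[of b "{..<n}"] by blast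
  obtain xs where xs: "set xs = P" "distinct xs"
    using finite_distinct_list[OF finite_elements[OF _ P]] by auto
  define bs where "bs = map sorted_list_of_set xs"
  have sorted_bs: "ys = sorted_list_of_set (set ys)" "set ys \<in> P" if "ys \<in> set bs" for ys
    using that fin unfolding bs_def xs(1)[symmetric] by auto
  have blocks: "set ` set bs = P"
  proof -
    have "(\<lambda>b. set (sorted_list_of_set b)) ` P = id ` P" by (rule image_cong) (simp_all add: fin)
    then show ?thesis by (simp add: bs_def xs(1) image_image)
  qed
  have set_bs: "set (concat bs) = {..<n}"
    using blocks partition_onD1[OF P] by simp
  have nonempty: "[] \<notin> set bs"
    using blocks partition_onD3[OF P] by (metis empty_set image_eqI)
  have "distinct bs"
    unfolding bs_def distinct_map using xs fin by (metis inj_onI set_sorted_list_of_set)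
  moreover have "set ys \<inter> set zs = {}" if "ys \<in> set bs" "zs \<in> set bs" "ys \<noteq> zs" for ys zs
    using partition_onD2[OF P] sorted_bs[OF that(1)] sorted_bs[OF that(2)] that(3)
    by (metis disjointD)
  ultimately have "distinct (concat bs)"
    unfolding distinct_concat_iff removeAll_id[OF nonempty] using sorted_bs
    by (metis distinct_sorted_list_of_set)
  moreover have "\<forall>b\<in>set bs. length b \<le> 2"
    using sorted_bs small by (metis length_sorted_list_of_set)
  moreover have "wf_ht (two_level bs)"
    using set_bs n nonempty unfolding two_level_def by auto
  ultimately show thesis
    using that[of "two_level bs"] rel2_two_level[of bs] set_bs blocks unfolding hc_tree_def by auto
qed

section \<open>Dominant pairs\<close>

definition pair_weight :: "(nat \<Rightarrow> nat \<Rightarrow> real) \<Rightarrow> nat set \<Rightarrow> real" where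
  "pair_weight w e = w (Min e) (Max e)"

definition pair_key :: "(nat \<Rightarrow> nat \<Rightarrow> real) \<Rightarrow> nat set \<Rightarrow> real \<times> nat \<times> nat" where
  "pair_key w e = (pair_weight w e, Min e, Max e)"

definition dominant_pairs :: "(nat \<Rightarrow> nat \<Rightarrow> real) \<Rightarrow> nat \<Rightarrow> nat set set" where
  "dominant_pairs w n = {e \<in> k_subsets 2 {..<n}.
     \<forall>f \<in> k_subsets 2 {..<n}. f \<noteq> e \<and> f \<inter> e \<noteq> {} \<longrightarrow> pair_key w f < pair_key w e}"

lemma pair_key_doubleton [simp]: "i < j \<Longrightarrow> pair_key w {i,j} = (w i j, i, j)"
  unfolding pair_key_def pair_weight_def by simp

lemma card_2_eq_Min_Max:
  assumes "card (e :: 'a :: linorder set) = 2"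
  shows "e = {Min e, Max e}"
proof -
  obtain x y where "e = {x,y}" "x \<noteq> y" using assms by (auto simp: card_2_iff)
  then show ?thesis by (cases "x < y") (auto simp: min_def max_def)
qed

lemma inj_on_pair_key: "inj_on (pair_key w) (k_subsets 2 V)"
proof (rule inj_onI)
  fix e f assume "e \<in> k_subsets 2 V" "f \<in> k_subsets 2 V" "pair_key w e = pair_key w f"
  then show "e = f"
    using card_2_eq_Min_Max[of e] card_2_eq_Min_Max[of f] unfolding k_subsets_def pair_key_def by auto
qed

lemma dominant_pairs_disjoint:
  assumes "e \<in> dominant_pairs w n" "f \<in> dominant_pairs w n" "e \<noteq> f"
  shows "e \<inter> f = {}"
proof (rule ccontr)
  assume meet: "e \<inter> f \<noteq> {}"
  have "pair_key w f < pair_key w e" "pair_key w e < pair_key w f"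
    using assms meet unfolding dominant_pairs_def by (auto simp: inf_commute)
  then show False by simp
qed

lemma dominated_pair:
  assumes "e \<in> k_subsets 2 {..<n}" "e \<notin> dominant_pairs w n"
  obtains f where "f \<in> k_subsets 2 {..<n}" "f \<noteq> e" "f \<inter> e \<noteq> {}" "pair_key w e < pair_key w f"
proof -
  obtain f where f: "f \<in> k_subsets 2 {..<n}" "f \<noteq> e" "f \<inter> e \<noteq> {}" "\<not> pair_key w f < pair_key w e"
    using assms unfolding dominant_pairs_def by auto
  then have "pair_key w f \<noteq> pair_key w e" using inj_on_pair_key assms(1) by (metis inj_onD)
  then show thesis using that f by auto
qed

lemma partition_on_dominant_pairs:
  "partition_on {..<n} (dominant_pairs w n \<union> (\<lambda>v. {v}) ` {v. v < n \<and> (\<forall>e\<in>dominant_pairs w n. v \<notin> e)})"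
  (is "partition_on _ (?D \<union> ?S)")
proof (rule partition_onI)
  have "?D \<subseteq> k_subsets 2 {..<n}" unfolding dominant_pairs_def by auto
  then have "\<Union>?D \<subseteq> {..<n}" unfolding k_subsets_def by auto
  then show "\<Union>(?D \<union> ?S) = {..<n}" by auto
  show "disjnt p q" if "p \<in> ?D \<union> ?S" "q \<in> ?D \<union> ?S" "p \<noteq> q" for p q
    using that dominant_pairs_disjoint[of p w n q] unfolding disjnt_def by auto
  have "{} \<notin> ?D" unfolding dominant_pairs_def k_subsets_def by auto
  then show "{} \<notin> ?D \<union> ?S" by auto
qed

lemma dominant_pairs_tree_exists:
  assumes "0 < n"
  obtains T where "hc_tree n T"
    and "\<And>i j k. i < n \<Longrightarrow> j < n \<Longrightarrow> k < n \<Longrightarrow> i \<noteq> j \<Longrightarrow> i \<noteq> k \<Longrightarrow> j \<noteq> k \<Longrightarrow>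
           rel2 T i j k \<longleftrightarrow> {i,j} \<in> dominant_pairs w n"
proof -
  let ?D = "dominant_pairs w n"
  let ?P = "?D \<union> (\<lambda>v. {v}) ` {v. v < n \<and> (\<forall>e\<in>?D. v \<notin> e)}"
  have D: "card b = 2" "finite b" if "b \<in> ?D" for b
    using that unfolding dominant_pairs_def k_subsets_def by (auto intro: card_ge_0_finite)
  then have small: "\<forall>b\<in>?P. card b \<le> 2" by auto
  have blocks: "(\<exists>b\<in>?P. {i,j} \<subseteq> b) \<longleftrightarrow> {i,j} \<in> ?D" if ij: "i \<noteq> j" for i j
  proof
    assume "\<exists>b\<in>?P. {i,j} \<subseteq> b"
    then obtain b where b: "b \<in> ?D" "{i,j} \<subseteq> b" using ij by auto
    then have "{i,j} = b" using card_subset_eq[OF D(2)[OF b(1)] b(2)] D(1)[OF b(1)] ij by simp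
    then show "{i,j} \<in> ?D" using b by simp
  next
    assume "{i,j} \<in> ?D"
    then show "\<exists>b\<in>?P. {i,j} \<subseteq> b" by blast
  qed
  obtain T where T: "hc_tree n T"
    and rel: "\<And>i j k. i < n \<Longrightarrow> j < n \<Longrightarrow> k < n \<Longrightarrow> i \<noteq> j \<Longrightarrow> i \<noteq> k \<Longrightarrow> j \<noteq> k \<Longrightarrow>
           rel2 T i j k \<longleftrightarrow> (\<exists>b\<in>?P. {i,j} \<subseteq> b)"
    using partition_tree_exists[OF partition_on_dominant_pairs small assms] by blast
  show thesis by (rule that[OF T]) (simp add: rel blocks del: insert_subset)
qed

lemma tcost_le_unmatched_pairs:
  assumes M: "\<And>e f. e \<in> M \<Longrightarrow> f \<in> M \<Longrightarrow> e \<noteq> f \<Longrightarrow> e \<inter> f = {}"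
    and rel: "rel2 T i j k \<longleftrightarrow> {i,j} \<in> M" "rel2 T i k j \<longleftrightarrow> {i,k} \<in> M" "rel2 T j k i \<longleftrightarrow> {j,k} \<in> M"
    and o: "i < j" "j < k" and nonneg: "0 \<le> w i j" "0 \<le> w i k" "0 \<le> w j k"
  shows "tcost w T i j k \<le> (\<Sum>e\<in>k_subsets 2 {i,j,k}. if e \<in> M then 0 else pair_weight w e)"
proof -
  have "{i,j} \<inter> {i,k} \<noteq> {}" "{i,j} \<inter> {j,k} \<noteq> {}" "{i,k} \<inter> {j,k} \<noteq> {}"
    and "{i,j} \<noteq> {i,k}" "{i,j} \<noteq> {j,k}" "{i,k} \<noteq> {j,k}"
    using o by (auto simp: doubleton_eq_iff)
  then have "\<not> ({i,j} \<in> M \<and> {i,k} \<in> M)" "\<not> ({i,j} \<in> M \<and> {j,k} \<in> M)" "\<not> ({i,k} \<in> M \<and> {j,k} \<in> M)"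
    using M by blast+
  moreover have "pair_weight w {i,j} = w i j" "pair_weight w {i,k} = w i k" "pair_weight w {j,k} = w j k"
    using o unfolding pair_weight_def by auto
  ultimately show ?thesis
    unfolding sum_k_subsets_2_triple[OF o] tcost_def rel using nonneg by auto
qed

lemma TC_le_non_dominant_pairs:
  assumes T: "\<And>i j k. i < n \<Longrightarrow> j < n \<Longrightarrow> k < n \<Longrightarrow> i \<noteq> j \<Longrightarrow> i \<noteq> k \<Longrightarrow> j \<noteq> k \<Longrightarrow>
           rel2 T i j k \<longleftrightarrow> {i,j} \<in> dominant_pairs w n"
    and w: "\<forall>i<n. \<forall>j<n. 0 \<le> w i j"
  shows "TC n w T \<le> (real n - 2) *
           (\<Sum>e\<in>k_subsets 2 {..<n}. if e \<in> dominant_pairs w n then 0 else pair_weight w e)"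
proof -
  let ?h = "\<lambda>e. if e \<in> dominant_pairs w n then 0 else pair_weight w e"
  have "TC n w T \<le> (\<Sum>(i,j,k)\<in>ordered_triples {..<n}. \<Sum>e\<in>k_subsets 2 {i,j,k}. ?h e)"
    unfolding TC_def triples_eq_ordered_triples
  proof (rule sum_mono, clarify)
    fix i j k assume "(i,j,k) \<in> ordered_triples {..<n}"
    then have "i < j" "j < k" "k < n" unfolding ordered_triples_def by auto
    then show "tcost w T i j k \<le> (\<Sum>e\<in>k_subsets 2 {i,j,k}. ?h e)"
      using T w by (intro tcost_le_unmatched_pairs[OF dominant_pairs_disjoint]) auto
  qed
  also have "\<dots> = (real n - 2) * (\<Sum>e\<in>k_subsets 2 {..<n}. ?h e)"
    using sum_ordered_triples[of "\<lambda>s. \<Sum>e\<in>k_subsets 2 s. ?h e"] sum_k_subsets_3_2[of "{..<n}" ?h]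
    by simp
  finally show ?thesis .
qed

lemma min_pair_sums_eq_dominated:
  fixes i j k :: nat
  assumes o: "i < j" "j < k"
  shows "min (w i j + w i k) (min (w i j + w j k) (w i k + w j k))
       = (\<Sum>e\<in>k_subsets 2 {i,j,k}.
            if \<exists>f\<in>k_subsets 2 {i,j,k}. pair_key w e < pair_key w f then pair_weight w e else 0)"
proof -
  have "pair_weight w {i,j} = w i j" "pair_weight w {i,k} = w i k" "pair_weight w {j,k} = w j k"
    using o unfolding pair_weight_def by auto
  moreover have "(\<exists>f\<in>k_subsets 2 {i,j,k}. pair_key w {i,j} < pair_key w f) \<longleftrightarrow> w i j \<le> w i k \<or> w i j \<le> w j k"
    and "(\<exists>f\<in>k_subsets 2 {i,j,k}. pair_key w {i,k} < pair_key w f) \<longleftrightarrow> w i k < w i j \<or> w i k \<le> w j k"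
    and "(\<exists>f\<in>k_subsets 2 {i,j,k}. pair_key w {j,k} < pair_key w f) \<longleftrightarrow> w j k < w i j \<or> w j k < w i k"
    using o unfolding k_subsets_2_triple[OF o] by auto
  ultimately show ?thesis
    unfolding sum_k_subsets_2_triple[OF o] by (simp add: min_def)
qed

lemma BC_eq_sum_dominated:
  "BC n w = (\<Sum>e\<in>k_subsets 2 {..<n}. \<Sum>s\<in>{s \<in> k_subsets 3 {..<n}. e \<subseteq> s}.
              if \<exists>f\<in>k_subsets 2 s. pair_key w e < pair_key w f then pair_weight w e else 0)"
proof -
  let ?q = "\<lambda>e s. if \<exists>f\<in>k_subsets 2 s. pair_key w e < pair_key w f then pair_weight w e else 0"
  have "BC n w = (\<Sum>(i,j,k)\<in>ordered_triples {..<n}. \<Sum>e\<in>k_subsets 2 {i,j,k}. ?q e {i,j,k})"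
    unfolding BC_def triples_eq_ordered_triples
    by (rule sum.cong) (auto simp: ordered_triples_def min_pair_sums_eq_dominated)
  also have "\<dots> = (\<Sum>s\<in>k_subsets 3 {..<n}. \<Sum>e\<in>k_subsets 2 s. ?q e s)"
    by (rule sum_ordered_triples)
  also have "\<dots> = (\<Sum>e\<in>k_subsets 2 {..<n}. \<Sum>s\<in>{s \<in> k_subsets 3 {..<n}. e \<subseteq> s}. ?q e s)"
    by (rule sum_k_subsets_3_2_swap) simp
  finally show ?thesis .
qed

lemma non_dominant_pairs_le_BC:
  assumes w: "\<forall>i<n. \<forall>j<n. 0 \<le> w i j"
  shows "(\<Sum>e\<in>k_subsets 2 {..<n}. if e \<in> dominant_pairs w n then 0 else pair_weight w e) \<le> BC n w"
  unfolding BC_eq_sum_dominated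
proof (rule sum_mono)
  fix e assume e: "e \<in> k_subsets 2 {..<n}"
  let ?q = "\<lambda>s. if \<exists>f\<in>k_subsets 2 s. pair_key w e < pair_key w f then pair_weight w e else 0"
  let ?S = "{s \<in> k_subsets 3 {..<n}. e \<subseteq> s}"
  have "finite e" "e \<noteq> {}" "e \<subseteq> {..<n}" using e unfolding k_subsets_def by (auto intro: card_ge_0_finite)
  then have "Min e < n" "Max e < n" using Min_in Max_in by blast+
  then have q: "0 \<le> ?q s" for s using w unfolding pair_weight_def by simp
  show "(if e \<in> dominant_pairs w n then 0 else pair_weight w e) \<le> sum ?q ?S"
  proof (cases "e \<in> dominant_pairs w n")
    case True
    then show ?thesis using q by (simp add: sum_nonneg)
  next
    case False
    then obtain f where f: "f \<in> k_subsets 2 {..<n}" "f \<noteq> e" "f \<inter> e \<noteq> {}"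
      "pair_key w e < pair_key w f"
      using dominated_pair[OF e] by blast
    have "card (e \<union> f) = 3"
      using card_Un_k_subsets_2[OF e f(1)] f(2,3) by (metis inf_commute)
    then have S: "e \<union> f \<in> ?S" using e f(1) unfolding k_subsets_def by auto
    have "f \<in> k_subsets 2 (e \<union> f)" using f(1) unfolding k_subsets_def by auto
    then have "?q (e \<union> f) = pair_weight w e" using f(4) by auto
    moreover have "?q (e \<union> f) \<le> sum ?q ?S"
      by (rule member_le_sum[OF S]) (simp_all add: q)
    ultimately have "pair_weight w e \<le> sum ?q ?S" by simp
    then show ?thesis using False by simp
  qed
qed

lemma rho_star_le_card_minus_2:
  assumes n: "3 \<le> n" and w: "\<forall>i<n. \<forall>j<n. 0 \<le> w i j"
  shows "rho_star n w \<le> ereal (real n - 2)"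
proof -
  have "0 < n" using n by simp
  then obtain T where T: "hc_tree n T"
    and rel: "\<And>i j k. i < n \<Longrightarrow> j < n \<Longrightarrow> k < n \<Longrightarrow> i \<noteq> j \<Longrightarrow> i \<noteq> k \<Longrightarrow> j \<noteq> k \<Longrightarrow>
           rel2 T i j k \<longleftrightarrow> {i,j} \<in> dominant_pairs w n"
    by (rule dominant_pairs_tree_exists[where w = w]) blast
  have "TC n w T \<le> (real n - 2) *
           (\<Sum>e\<in>k_subsets 2 {..<n}. if e \<in> dominant_pairs w n then 0 else pair_weight w e)"
    by (rule TC_le_non_dominant_pairs[OF rel w])
  also have "\<dots> \<le> (real n - 2) * BC n w"
    using non_dominant_pairs_le_BC[OF w] n by (intro mult_left_mono) auto
  finally show ?thesis using rho_star_le[OF T w] n by simp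
qed

theorem theorem1:
  shows "(\<forall>(n::nat) (w::nat \<Rightarrow> nat \<Rightarrow> real).
            n \<ge> 3 \<and> (\<forall>i<n. \<forall>j<n. w i j = w j i \<and> w i j \<ge> 0) \<longrightarrow>
            1 \<le> rho_star n w \<and> rho_star n w \<le> ereal (real n - 2))
       \<and> (\<forall>(n::nat) (E::nat set set).
            n \<ge> 3 \<and> simple_graph n E \<and> connected_graph n E \<longrightarrow>
            1 \<le> rho_star n (unw E) \<and>
            rho_star n (unw E) \<le>
              ereal ((real n ^ 2 - 2 * real n) / (2 * real (card E) - real n)))"
  using one_le_rho_star rho_star_le_card_minus_2 one_le_rho_star[of _ "unw _"] unw_nonneg rho_star_unw_le
  by auto

end
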